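(* Let $x_->x_+>0$ be real numbers and $\omega>0$. On $\mathbb{C}^4$ with orthonormal basis $\{|0\rangle,|1\rangle,|2\rangle,|3\rangle\}$ define the Hermitian operators $$X\coloneqq (x_--x_+)(|1\rangle\langle 2|+|2\rangle\langle 1|)+\sqrt{x_+x_-}\,(|0\rangle\langle 1|+|1\rangle\langle 0|+|2\rangle\langle 3|+|3\rangle\langle 2|),$$ $$Y\coloneqq -i(x_--x_+)(|1\rangle\langle 2|-|2\rangle\langle 1|)-i\sqrt{x_+x_-}\,(|0\rangle\langle 1|-|1\rangle\langle 0|+|2\rangle\langle 3|-|3\rangle\langle 2|),$$ and the Hamiltonian $H\coloneqq\omega\sum_{n=0}^3 n\,|n\rangle\langle n|$, with $X(t)\coloneqq e^{iHt}Xe^{-iHt}$, $Y(t)\coloneqq e^{iHt}Ye^{-iHt}$. Then: (i) the spectrum of $X$ is $\{-x_-,-x_+,x_+,x_-\}$; (ii) for all $t$, $X(t)=\cos(\omega t)X+\sin(\omega t)Y$ and $Y(t)=\cos(\omega t)Y-\sin(\omega t)X$; (iii) with $t_k\coloneqq 2\pi k/(3\omega)$ and $|\psi\rangle\coloneqq(|0\rangle-|3\rangle)/\sqrt2$, $$\frac13\sum_{k=0}^2\langle\psi|\Theta(X(t_k))|\psi\rangle=\big(1+x_+/x_-\big)^{-1}.$$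
   Context: For a Hermitian operator $A$ on a finite-dimensional Hilbert space, $\Theta(A)$ denotes the spectral function of $A$ with $\Theta(a)=1$ for $a>0$, $\Theta(a)=0$ for $a<0$, $\Theta(0)=1/2$; i.e. the projector onto the positive-eigenvalue eigenspace plus one half the projector onto the kernel. *)

theory Defs
  imports "HOL-Analysis.Analysis" "HOL-Library.Numeral_Type"
begin

type_synonym cmat4 = "complex ^ 4 ^ 4"
type_synonym cvec4 = "complex ^ 4"

definition ket :: "4 \<Rightarrow> cvec4" where
  "ket a = (\<chi> i. if i = a then 1 else 0)"

definition ketbra :: "4 \<Rightarrow> 4 \<Rightarrow> cmat4" where
  "ketbra a b = (\<chi> i j. if i = a \<and> j = b then 1 else 0)"

definition cscale :: "complex \<Rightarrow> cmat4 \<Rightarrow> cmat4" where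
  "cscale c M = (\<chi> i j. c * M $ i $ j)"

definition madj :: "cmat4 \<Rightarrow> cmat4" where
  "madj M = (\<chi> i j. cnj (M $ j $ i))"

primrec mpow :: "cmat4 \<Rightarrow> nat \<Rightarrow> cmat4" where
  "mpow A 0 = mat 1"
| "mpow A (Suc n) = A ** mpow A n"

definition mexp :: "cmat4 \<Rightarrow> cmat4" where
  "mexp A = (\<Sum>k. (1 / fact k) *\<^sub>R mpow A k)"

definition spectrum :: "cmat4 \<Rightarrow> complex set" where
  "spectrum A = {l. \<exists>v. v \<noteq> 0 \<and> A *v v = l *s v}"

definition eigenspace :: "cmat4 \<Rightarrow> complex \<Rightarrow> cvec4 set" where
  "eigenspace A l = {v. A *v v = l *s v}"

definition proj :: "cvec4 set \<Rightarrow> cmat4" where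
  "proj S = (THE P. P ** P = P \<and> madj P = P \<and> range (\<lambda>v. P *v v) = S)"

definition Theta :: "cmat4 \<Rightarrow> cmat4" where
  "Theta A = proj (span (\<Union>l\<in>{l \<in> spectrum A. Im l = 0 \<and> Re l > 0}. eigenspace A l))
             + cscale (1/2) (proj {v. A *v v = 0})"

definition expval :: "cvec4 \<Rightarrow> cmat4 \<Rightarrow> complex" where
  "expval psi M = (\<Sum>i\<in>UNIV. cnj (psi $ i) * (M *v psi) $ i)"

definition Xop :: "real \<Rightarrow> real \<Rightarrow> cmat4" where
  "Xop xm xp = cscale (complex_of_real (xm - xp)) (ketbra 1 2 + ketbra 2 1)
              + cscale (complex_of_real (sqrt (xp * xm)))
                  (ketbra 0 1 + ketbra 1 0 + ketbra 2 3 + ketbra 3 2)"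

definition Yop :: "real \<Rightarrow> real \<Rightarrow> cmat4" where
  "Yop xm xp = cscale (- \<i> * complex_of_real (xm - xp)) (ketbra 1 2 - ketbra 2 1)
              + cscale (- \<i> * complex_of_real (sqrt (xp * xm)))
                  (ketbra 0 1 - ketbra 1 0 + ketbra 2 3 - ketbra 3 2)"

definition Hop :: "real \<Rightarrow> cmat4" where
  "Hop \<omega> = cscale (complex_of_real \<omega>) (\<Sum>n<4. cscale (of_nat n) (ketbra (of_nat n) (of_nat n)))"

definition heis :: "cmat4 \<Rightarrow> cmat4 \<Rightarrow> real \<Rightarrow> cmat4" where
  "heis H A t = mexp (cscale (\<i> * complex_of_real t) H) ** A
                  ** mexp (cscale (- \<i> * complex_of_real t) H)"

definition psi :: cvec4 where
  "psi = (\<chi> i. complex_of_real (1 / sqrt 2) * (ket 0 - ket 3) $ i)"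

end

theory Submission
  imports Defs
begin

text \<open>
  With s = sqrt (x+ x-), the vectors (s, x+, -x+, -s), (s, x-, x-, s), (s, -x+, -x+, s) and
  (s, -x-, x-, -s) are pairwise orthogonal eigenvectors of X for the eigenvalues x+, x-, -x+, -x-.
  This gives the spectrum, and Theta(X) is the orthogonal projector onto the first two of them.
  Since H is diagonal, conjugation by e^(iHt) multiplies the (j,k) entry of an operator by
  e^(i omega t (j - k)); as X and Y only couple neighbouring levels, this is (ii). Conjugation by
  a diagonal unitary carries an orthogonal eigenbasis to one with the same eigenvalues, so
  Theta(X(t)) is the conjugate of Theta(X). At the times t_k the phases of |0> and |3> are both 1
  and psi lives on these two levels, so with w_0 the first eigenvector every term of the average
  equals <psi|Theta(X)|psi> = |<w_0|psi>|^2 / |w_0|^2 = 2 x+ x- / (2 x+ (x+ + x-)).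
\<close>

section \<open>Diagonal matrices\<close>

definition diag_mat :: "('n \<Rightarrow> 'a::zero) \<Rightarrow> 'a ^ 'n ^ 'n" where
  "diag_mat f = (\<chi> i j. if i = j then f i else 0)"

lemma diag_mat_nth: "diag_mat f $ i $ j = (if i = j then f i else 0)"
  by (simp add: diag_mat_def)

lemma diag_mat_mult_nth: "(diag_mat f ** A) $ i $ j = f i * A $ i $ j"
  by (simp add: matrix_matrix_mult_def diag_mat_nth mult_delta_left)

lemma mult_diag_mat_nth: "(A ** diag_mat f) $ i $ j = A $ i $ j * f j"
  by (simp add: matrix_matrix_mult_def diag_mat_nth mult_delta_right)

lemma diag_mat_mult_vec_nth: "(diag_mat f *v v) $ i = f i * v $ i"
  by (simp add: matrix_vector_mult_def diag_mat_nth mult_delta_left)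

lemma diag_mat_mult_diag_mat: "diag_mat f ** diag_mat g = diag_mat (\<lambda>i. f i * g i)"
  by (simp add: vec_eq_iff diag_mat_mult_nth diag_mat_nth)

lemma mpow_diag_mat: "mpow (diag_mat f) k = diag_mat (\<lambda>i. f i ^ k)"
proof (induction k)
  case 0
  show ?case by (simp add: mat_def diag_mat_def)
next
  case (Suc k)
  then show ?case by (simp add: diag_mat_mult_diag_mat)
qed

lemma mexp_diag_mat: "mexp (diag_mat f) = diag_mat (\<lambda>i. exp (f i))"
proof -
  have "(\<lambda>k. (1 / fact k) *\<^sub>R mpow (diag_mat f) k) sums diag_mat (\<lambda>i. exp (f i))"
    unfolding sums_def
  proof (intro vec_tendstoI)
    fix i j
    have "(\<lambda>k. f i ^ k /\<^sub>R fact k) sums exp (f i)"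
      by (rule exp_converges)
    then show "((\<lambda>m. (\<Sum>k<m. (1 / fact k) *\<^sub>R mpow (diag_mat f) k) $ i $ j)
               \<longlongrightarrow> diag_mat (\<lambda>i. exp (f i)) $ i $ j) sequentially"
      by (cases "i = j") (simp_all add: mpow_diag_mat diag_mat_nth sums_def divide_inverse)
  qed
  then show ?thesis
    unfolding mexp_def by (rule sums_unique[symmetric])
qed

lemma cscale_diag_mat: "cscale c (diag_mat f) = diag_mat (\<lambda>i. c * f i)"
  by (simp add: cscale_def diag_mat_def vec_eq_iff)

section \<open>Inner product and orthogonal projectors\<close>

definition cinner :: "cvec4 \<Rightarrow> cvec4 \<Rightarrow> complex" where
  "cinner u v = (\<Sum>j\<in>UNIV. cnj (u $ j) * v $ j)"

lemma cinner_add_right: "cinner u (v + v') = cinner u v + cinner u v'"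
  by (simp add: cinner_def distrib_left sum.distrib)

lemma cinner_scale_right: "cinner u (c *s v) = c * cinner u v"
  by (simp add: cinner_def sum_distrib_left mult_ac)

lemma cinner_scaleR_right: "cinner u (r *\<^sub>R v) = complex_of_real r * cinner u v"
proof -
  have "r *\<^sub>R v = complex_of_real r *s v"
    unfolding vec_eq_iff by (simp add: scaleR_conv_of_real[where 'a = complex])
  then show ?thesis
    by (simp add: cinner_scale_right)
qed

lemma cinner_zero_right: "cinner u 0 = 0"
  by (simp add: cinner_def)

lemma cinner_sum_right: "cinner u (\<Sum>m\<in>S. f m) = (\<Sum>m\<in>S. cinner u (f m))"
  unfolding cinner_def by (simp add: sum_distrib_left) (rule sum.swap)

lemma cnj_cinner: "cnj (cinner u v) = cinner v u"
  by (simp add: cinner_def mult.commute)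

lemma cinner_self_eq_0_iff: "cinner v v = 0 \<longleftrightarrow> v = 0"
proof -
  have "cinner v v = complex_of_real (\<Sum>j\<in>UNIV. (cmod (v $ j))\<^sup>2)"
    unfolding cinner_def of_real_sum complex_norm_square by (simp only: mult.commute)
  then have "cinner v v = 0 \<longleftrightarrow> (\<Sum>j\<in>UNIV. (cmod (v $ j))\<^sup>2) = 0"
    by (simp only: of_real_eq_0_iff)
  also have "\<dots> \<longleftrightarrow> (\<forall>j. v $ j = 0)"
    by (simp add: sum_nonneg_eq_0_iff)
  finally show ?thesis
    by (simp add: vec_eq_iff)
qed

lemma expval_eq_cinner: "expval u M = cinner u (M *v u)"
  by (simp add: expval_def cinner_def)

lemma madj_mult: "madj (A ** B) = madj B ** madj A"
  by (simp add: madj_def matrix_matrix_mult_def vec_eq_iff mult.commute)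

lemma idempotent_mult_eq:
  fixes P B :: cmat4
  assumes "P ** P = P" and "range (\<lambda>v. B *v v) \<subseteq> range (\<lambda>v. P *v v)"
  shows "P ** B = B"
proof -
  have "(P ** B) *v x = B *v x" for x
  proof -
    obtain y where "B *v x = P *v y"
      using assms(2) by auto
    then show ?thesis
      using assms(1) by (metis matrix_vector_mul_assoc)
  qed
  then show ?thesis
    by (simp add: matrix_eq)
qed

lemma proj_unique:
  assumes "P ** P = P" and "madj P = P" and "range (\<lambda>v. P *v v) = S"
  shows "proj S = P"
  unfolding proj_def
proof (rule the_equality)
  show "P ** P = P \<and> madj P = P \<and> range ((*v) P) = S"
    using assms by simp
next
  fix Q assume Q: "Q ** Q = Q \<and> madj Q = Q \<and> range ((*v) Q) = S"
  then have "Q ** P = P" and "P ** Q = Q"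
    using idempotent_mult_eq assms by simp_all
  then have "P = P ** Q"
    using Q assms by (metis madj_mult)
  then show "Q = P"
    using \<open>P ** Q = Q\<close> by simp
qed

lemma proj_zero: "proj {0} = 0"
  by (rule proj_unique) (auto simp: madj_def vec_eq_iff matrix_matrix_mult_def)

section \<open>Orthogonal eigenbases and the spectral function\<close>

locale orthogonal_eigenbasis =
  fixes A :: cmat4 and w :: "4 \<Rightarrow> cvec4" and l :: "4 \<Rightarrow> real"
  assumes eigenvector: "A *v w i = complex_of_real (l i) *s w i"
    and orthogonal: "i \<noteq> j \<Longrightarrow> cinner (w i) (w j) = 0"
    and nonzero: "w i \<noteq> 0"
begin

lemma cinner_self_neq_0: "cinner (w i) (w i) \<noteq> 0"
  using nonzero by (simp add: cinner_self_eq_0_iff)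

lemma completeness:
  "(\<Sum>i\<in>UNIV. w i $ j * cnj (w i $ k) / cinner (w i) (w i)) = (if j = k then 1 else 0)"
proof -
  \<comment> \<open>By orthogonality \<open>V\<close> is a left inverse of \<open>W\<close>; square matrices over a field
    have two-sided inverses.\<close>
  define W :: cmat4 where "W = (\<chi> j i. w i $ j)"
  define V :: cmat4 where "V = (\<chi> i k. cnj (w i $ k) / cinner (w i) (w i))"
  have "(V ** W) $ i $ m = cinner (w i) (w m) / cinner (w i) (w i)" for i m
    by (simp add: V_def W_def matrix_matrix_mult_def cinner_def sum_divide_distrib)
  then have "V ** W = mat 1"
    by (simp add: vec_eq_iff mat_def orthogonal cinner_self_neq_0)
  then have "W ** V = mat 1"
    by (rule matrix_left_right_inverse1)
  then show ?thesis
    by (simp add: vec_eq_iff mat_def W_def V_def matrix_matrix_mult_def)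
qed

definition coord :: "4 \<Rightarrow> cvec4 \<Rightarrow> complex" where
  "coord i v = cinner (w i) v / cinner (w i) (w i)"

lemma coord_add: "coord i (u + v) = coord i u + coord i v"
  by (simp add: coord_def cinner_add_right add_divide_distrib)

lemma coord_scaleR: "coord i (r *\<^sub>R v) = complex_of_real r * coord i v"
  by (simp add: coord_def cinner_scaleR_right)

lemma coord_zero: "coord i 0 = 0"
  by (simp add: coord_def cinner_zero_right)

lemma expansion: "v = (\<Sum>i\<in>UNIV. coord i v *s w i)"
proof -
  have "(\<Sum>i\<in>UNIV. coord i v *s w i) $ j
          = (\<Sum>k\<in>UNIV. v $ k * (\<Sum>i\<in>UNIV. w i $ j * cnj (w i $ k) / cinner (w i) (w i)))" for j
    unfolding coord_def cinner_def
    by (simp add: sum_distrib_left sum_distrib_right sum_divide_distrib mult_ac) (rule sum.swap)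
  then show ?thesis
    by (simp add: vec_eq_iff completeness if_distrib cong: if_cong)
qed

lemma coord_sum: "coord i (\<Sum>m\<in>S. c m *s w m) = (if i \<in> S then c i else 0)"
proof -
  have "coord i (\<Sum>m\<in>S. c m *s w m) = (\<Sum>m\<in>S. if m = i then c i else 0)"
    unfolding coord_def cinner_sum_right cinner_scale_right sum_divide_distrib
    by (rule sum.cong) (auto simp: orthogonal cinner_self_neq_0)
  then show ?thesis
    by simp
qed

lemma coord_eigenvector:
  assumes "A *v v = \<mu> *s v"
  shows "coord i v * (complex_of_real (l i) - \<mu>) = 0"
proof -
  have "A *v v = A *v (\<Sum>m\<in>UNIV. coord m v *s w m)"
    by (simp flip: expansion)
  also have "\<dots> = (\<Sum>m\<in>UNIV. (coord m v * complex_of_real (l m)) *s w m)"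
    by (simp add: vec.sum vec.scale eigenvector mult.commute)
  finally have "A *v v = (\<Sum>m\<in>UNIV. (coord m v * complex_of_real (l m)) *s w m)" .
  then have "coord i v * complex_of_real (l i) = coord i (A *v v)"
    by (simp add: coord_sum)
  also have "\<dots> = coord i v * \<mu>"
    by (simp add: assms coord_def cinner_scale_right mult.commute)
  finally show ?thesis
    by (simp add: right_diff_distrib)
qed

lemma coord_nonzero: "v \<noteq> 0 \<Longrightarrow> \<exists>i. coord i v \<noteq> 0"
  by (rule ccontr) (use expansion[of v] in simp)

lemma spectrum_eq: "spectrum A = range (\<lambda>i. complex_of_real (l i))"
proof
  show "spectrum A \<subseteq> range (\<lambda>i. complex_of_real (l i))"
  proof
    fix \<mu> assume "\<mu> \<in> spectrum A"
    then obtain v where "v \<noteq> 0" and v: "A *v v = \<mu> *s v"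
      by (auto simp: spectrum_def)
    then obtain i where "coord i v \<noteq> 0"
      using coord_nonzero by blast
    with coord_eigenvector[OF v, of i] show "\<mu> \<in> range (\<lambda>i. complex_of_real (l i))"
      by auto
  qed
  show "range (\<lambda>i. complex_of_real (l i)) \<subseteq> spectrum A"
    using eigenvector nonzero by (auto simp: spectrum_def)
qed

lemma expansion_restrict:
  assumes "\<forall>i\<in>-I. coord i v = 0"
  shows "(\<Sum>i\<in>I. coord i v *s w i) = v"
proof -
  have "(\<Sum>i\<in>I. coord i v *s w i) = (\<Sum>i\<in>UNIV. coord i v *s w i)"
    by (rule sum.mono_neutral_left) (use assms in auto)
  then show ?thesis
    by (simp flip: expansion)
qed

definition eigproj :: "4 set \<Rightarrow> cmat4" where
  "eigproj I = (\<chi> j k. \<Sum>i\<in>I. w i $ j * cnj (w i $ k) / cinner (w i) (w i))"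

lemma eigproj_mult_vec: "eigproj I *v v = (\<Sum>i\<in>I. coord i v *s w i)"
  unfolding eigproj_def coord_def cinner_def
  by (simp add: vec_eq_iff matrix_vector_mult_def sum_distrib_left sum_distrib_right
      sum_divide_distrib mult_ac) (intro allI sum.swap)

lemma proj_eq_eigproj: "proj {v. \<forall>i\<in>-I. coord i v = 0} = eigproj I"
proof (rule proj_unique)
  have "(eigproj I ** eigproj I) *v v = eigproj I *v v" for v
    by (simp flip: matrix_vector_mul_assoc add: eigproj_mult_vec coord_sum)
  then show "eigproj I ** eigproj I = eigproj I"
    by (simp add: matrix_eq)
  show "madj (eigproj I) = eigproj I"
    by (simp add: eigproj_def madj_def vec_eq_iff cnj_cinner mult.commute)
  show "range (\<lambda>v. eigproj I *v v) = {v. \<forall>i\<in>-I. coord i v = 0}"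
  proof (intro equalityI subsetI)
    fix v assume "v \<in> {v. \<forall>i\<in>-I. coord i v = 0}"
    then have "eigproj I *v v = v"
      by (simp add: eigproj_mult_vec expansion_restrict)
    then show "v \<in> range (\<lambda>v. eigproj I *v v)"
      by (metis rangeI)
  qed (auto simp: eigproj_mult_vec coord_sum)
qed

lemma span_positive_eigenspaces:
  "span (\<Union>\<mu>\<in>{\<mu> \<in> spectrum A. Im \<mu> = 0 \<and> Re \<mu> > 0}. eigenspace A \<mu>)
     = {v. \<forall>i\<in>-{i. l i > 0}. coord i v = 0}"
  (is "span ?E = ?S")
proof
  show "span ?E \<subseteq> ?S"
  proof (rule span_minimal)
    show "?E \<subseteq> ?S"
    proof
      fix v assume "v \<in> ?E"
      then obtain \<mu> where "\<mu> \<in> spectrum A" "Re \<mu> > 0" and v: "A *v v = \<mu> *s v"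
        by (auto simp: eigenspace_def)
      then obtain m where m: "\<mu> = complex_of_real (l m)" "l m > 0"
        using spectrum_eq by auto
      have "coord i v = 0" if "\<not> l i > 0" for i
        using coord_eigenvector[OF v, of i] that m by auto
      then show "v \<in> ?S"
        by auto
    qed
    \<comment> \<open>\<open>span\<close> is the real span, so only closure under real scaling is needed.\<close>
    show "subspace ?S"
      by (rule subspaceI) (simp_all add: coord_zero coord_add coord_scaleR)
  qed
  show "?S \<subseteq> span ?E"
  proof
    fix v assume v: "v \<in> ?S"
    have "c *s w i \<in> ?E" if "l i > 0" for c i
    proof -
      have "A *v (c *s w i) = c *s (complex_of_real (l i) *s w i)"
        by (simp only: vec.scale eigenvector)
      also have "\<dots> = complex_of_real (l i) *s (c *s w i)"
        by (simp only: vector_smult_assoc mult.commute)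
      moreover have "complex_of_real (l i) \<in> spectrum A"
        using spectrum_eq by auto
      ultimately show ?thesis
        using that by (intro UN_I[of "complex_of_real (l i)"]) (auto simp: eigenspace_def)
    qed
    then have "(\<Sum>i\<in>{i. l i > 0}. coord i v *s w i) \<in> span ?E"
      by (intro span_sum span_base) auto
    then show "v \<in> span ?E"
      using v by (simp add: expansion_restrict)
  qed
qed

lemma kernel_eq_zero:
  assumes "\<And>i. l i \<noteq> 0"
  shows "{v. A *v v = 0} = {0}"
proof -
  have "v = 0" if "A *v v = 0" for v
  proof (rule ccontr)
    assume "v \<noteq> 0"
    then obtain i where "coord i v \<noteq> 0"
      using coord_nonzero by blast
    moreover have "A *v v = 0 *s v"
      using that by simp
    ultimately show False
      using coord_eigenvector[of v 0 i] assms[of i] by simp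
  qed
  then show ?thesis
    by auto
qed

lemma Theta_eq_eigproj:
  assumes "\<And>i. l i \<noteq> 0"
  shows "Theta A = eigproj {i. l i > 0}"
  unfolding Theta_def span_positive_eigenspaces proj_eq_eigproj kernel_eq_zero[OF assms] proj_zero
  by (simp add: cscale_def vec_eq_iff)

lemma expval_eigproj:
  "expval u (eigproj I) = (\<Sum>i\<in>I. cnj (cinner (w i) u) * cinner (w i) u / cinner (w i) (w i))"
  by (simp add: expval_eq_cinner eigproj_mult_vec cinner_sum_right cinner_scale_right coord_def
      cnj_cinner mult.commute)

end

lemma cinner_diag_mat_unitary:
  assumes "\<And>j. cmod (z j) = 1"
  shows "cinner (diag_mat z *v u) (diag_mat z *v v) = cinner u v"
proof -
  have cancel: "cnj (z j * a) * (z j * b) = cnj a * b" for j a b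
  proof -
    have "cnj (z j * a) * (z j * b) = (cnj (z j) * z j) * (cnj a * b)"
      by (simp add: mult_ac)
    moreover have "cnj (z j) * z j = 1"
      using assms[of j] by (simp flip: complex_norm_square add: mult.commute)
    ultimately show ?thesis
      by simp
  qed
  then show ?thesis
    by (simp only: cinner_def diag_mat_mult_vec_nth cancel)
qed

lemma orthogonal_eigenbasis_diag_conj:
  assumes "orthogonal_eigenbasis A w l" and unit: "\<And>j. cmod (z j) = 1"
  shows "orthogonal_eigenbasis (diag_mat z ** A ** diag_mat (\<lambda>j. cnj (z j)))
           (\<lambda>i. diag_mat z *v w i) l"
proof -
  interpret orthogonal_eigenbasis A w l by fact
  have "cnj (z j) * z j = 1" for j
    using unit[of j] by (simp flip: complex_norm_square add: mult.commute)
  then have inverse: "diag_mat (\<lambda>j. cnj (z j)) *v (diag_mat z *v v) = v" for v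
    by (simp add: vec_eq_iff diag_mat_mult_vec_nth mult.assoc[symmetric])
  show ?thesis
  proof
    fix i j
    show "diag_mat z ** A ** diag_mat (\<lambda>j. cnj (z j)) *v (diag_mat z *v w i)
            = complex_of_real (l i) *s (diag_mat z *v w i)"
      by (simp flip: matrix_vector_mul_assoc add: inverse eigenvector vec.scale)
    show "i \<noteq> j \<Longrightarrow> cinner (diag_mat z *v w i) (diag_mat z *v w j) = 0"
      by (simp add: cinner_diag_mat_unitary unit orthogonal)
    show "diag_mat z *v w i \<noteq> 0"
      using inverse[of "w i"] nonzero[of i] by auto
  qed
qed

lemma Theta_diag_conj:
  assumes "orthogonal_eigenbasis A w l" and "\<And>i. l i \<noteq> 0" and "\<And>j. cmod (z j) = 1"
  shows "Theta (diag_mat z ** A ** diag_mat (\<lambda>j. cnj (z j)))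
           = diag_mat z ** Theta A ** diag_mat (\<lambda>j. cnj (z j))"
proof -
  interpret A: orthogonal_eigenbasis A w l by fact
  interpret B: orthogonal_eigenbasis "diag_mat z ** A ** diag_mat (\<lambda>j. cnj (z j))"
    "\<lambda>i. diag_mat z *v w i" l
    using assms(1,3) by (rule orthogonal_eigenbasis_diag_conj)
  show ?thesis
    unfolding A.Theta_eq_eigproj[OF assms(2)] B.Theta_eq_eigproj[OF assms(2)]
    by (simp add: vec_eq_iff A.eigproj_def B.eigproj_def diag_mat_mult_nth mult_diag_mat_nth
        diag_mat_mult_vec_nth cinner_diag_mat_unitary assms(3) sum_distrib_left sum_distrib_right
        mult_ac)
qed

lemma expval_diag_conj:
  "expval u (diag_mat z ** M ** diag_mat (\<lambda>j. cnj (z j)))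
     = expval (diag_mat (\<lambda>j. cnj (z j)) *v u) M"
proof -
  have "expval v N = (\<Sum>j\<in>UNIV. \<Sum>k\<in>UNIV. cnj (v $ j) * N $ j $ k * v $ k)" for v N
    by (simp add: expval_def matrix_vector_mult_def sum_distrib_left mult.assoc)
  then show ?thesis
    by (simp add: diag_mat_mult_nth mult_diag_mat_nth diag_mat_mult_vec_nth mult_ac)
qed

section \<open>The four-level model\<close>

definition level :: "4 \<Rightarrow> real" where
  "level j = (if j = 0 then 0 else if j = 1 then 1 else if j = 2 then 2 else 3)"

lemma Hop_eq_diag_mat: "Hop \<omega> = diag_mat (\<lambda>j. complex_of_real (\<omega> * level j))"
  using exhaust_4
  by (auto simp: vec_eq_iff forall_4 Hop_def lessThan_nat_numeral cscale_def ketbra_def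
      diag_mat_def level_def)

lemma heis_Hop_eq:
  "heis (Hop \<omega>) A t = diag_mat (\<lambda>j. cis (\<omega> * t * level j)) ** A
                        ** diag_mat (\<lambda>j. cnj (cis (\<omega> * t * level j)))"
proof -
  have "mexp (cscale (\<i> * complex_of_real s) (Hop \<omega>)) = diag_mat (\<lambda>j. cis (\<omega> * s * level j))"
    for s
    by (simp add: Hop_eq_diag_mat cscale_diag_mat mexp_diag_mat cis_conv_exp mult_ac)
  from this[of t] this[of "- t"] show ?thesis
    by (simp add: heis_def cis_cnj)
qed

lemma heis_Hop_nth:
  "heis (Hop \<omega>) A t $ j $ k = cis (\<omega> * t * (level j - level k)) * A $ j $ k"
  by (simp add: heis_Hop_eq diag_mat_mult_nth mult_diag_mat_nth cis_cnj cis_mult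
      right_diff_distrib mult_ac)

lemma heis_Hop_Xop:
  "heis (Hop \<omega>) (Xop xm xp) t
     = cscale (complex_of_real (cos (\<omega> * t))) (Xop xm xp)
       + cscale (complex_of_real (sin (\<omega> * t))) (Yop xm xp)"
  by (simp add: vec_eq_iff forall_4 heis_Hop_nth Xop_def Yop_def cscale_def ketbra_def level_def
      complex_eq_iff algebra_simps)

lemma heis_Hop_Yop:
  "heis (Hop \<omega>) (Yop xm xp) t
     = cscale (complex_of_real (cos (\<omega> * t))) (Yop xm xp)
       - cscale (complex_of_real (sin (\<omega> * t))) (Xop xm xp)"
  by (simp add: vec_eq_iff forall_4 heis_Hop_nth Xop_def Yop_def cscale_def ketbra_def level_def
      complex_eq_iff algebra_simps)

lemma Theta_heis_Hop:
  assumes "orthogonal_eigenbasis A w l" and "\<And>i. l i \<noteq> 0"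
  shows "Theta (heis (Hop \<omega>) A t) = diag_mat (\<lambda>j. cis (\<omega> * t * level j)) ** Theta A
                                   ** diag_mat (\<lambda>j. cnj (cis (\<omega> * t * level j)))"
  unfolding heis_Hop_eq by (rule Theta_diag_conj[OF assms]) simp

definition vec4 :: "'a \<Rightarrow> 'a \<Rightarrow> 'a \<Rightarrow> 'a \<Rightarrow> 'a ^ 4" where
  "vec4 a b c d = (\<chi> j. if j = 0 then a else if j = 1 then b else if j = 2 then c else d)"

definition X_eigvec :: "real \<Rightarrow> real \<Rightarrow> 4 \<Rightarrow> cvec4" where
  "X_eigvec xm xp i =
     (let s = complex_of_real (sqrt (xp * xm)); a = complex_of_real xp; b = complex_of_real xm in
      if i = 0 then vec4 s a (- a) (- s) else if i = 1 then vec4 s b b s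
      else if i = 2 then vec4 s (- a) (- a) s else vec4 s (- b) b (- s))"

definition X_eigval :: "real \<Rightarrow> real \<Rightarrow> 4 \<Rightarrow> real" where
  "X_eigval xm xp i = (if i = 0 then xp else if i = 1 then xm else if i = 2 then - xp else - xm)"

lemma X_orthogonal_eigenbasis:
  assumes "xp > 0" and "xm > 0"
  shows "orthogonal_eigenbasis (Xop xm xp) (X_eigvec xm xp) (X_eigval xm xp)"
proof
  fix i j :: 4
  have s: "complex_of_real (sqrt (xm * xp)) * complex_of_real (sqrt (xm * xp))
             = complex_of_real xm * complex_of_real xp"
    using assms by (simp flip: of_real_mult)
  show "Xop xm xp *v X_eigvec xm xp i = complex_of_real (X_eigval xm xp i) *s X_eigvec xm xp i"
    using exhaust_4[of i]
    by (elim disjE) (simp_all add: vec_eq_iff forall_4 matrix_vector_mult_def sum_4 Xop_def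
        cscale_def ketbra_def X_eigvec_def X_eigval_def vec4_def Let_def algebra_simps s)
  show "i \<noteq> j \<Longrightarrow> cinner (X_eigvec xm xp i) (X_eigvec xm xp j) = 0"
    using exhaust_4[of i] exhaust_4[of j]
    by (elim disjE) (simp_all add: cinner_def sum_4 X_eigvec_def vec4_def Let_def algebra_simps s)
  have "X_eigvec xm xp i $ 0 \<noteq> 0"
    using assms by (simp add: X_eigvec_def vec4_def Let_def)
  then show "X_eigvec xm xp i \<noteq> 0"
    by auto
qed

lemma X_eigval_neq_0: "xp > 0 \<Longrightarrow> xm > 0 \<Longrightarrow> X_eigval xm xp i \<noteq> 0"
  by (simp add: X_eigval_def)

lemma spectrum_Xop:
  assumes "xp > 0" and "xm > 0"
  shows "spectrum (Xop xm xp)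
           = {- complex_of_real xm, - complex_of_real xp, complex_of_real xp, complex_of_real xm}"
proof -
  have "spectrum (Xop xm xp) = range (\<lambda>i. complex_of_real (X_eigval xm xp i))"
    using X_orthogonal_eigenbasis[OF assms] by (rule orthogonal_eigenbasis.spectrum_eq)
  then show ?thesis
    unfolding UNIV_4 by (auto simp: X_eigval_def)
qed

lemma psi_nth: "psi $ j = (if j = 0 then 1 / sqrt 2 else if j = 3 then - 1 / sqrt 2 else 0)"
  by (simp add: psi_def ket_def)

lemma expval_psi_Theta_Xop:
  assumes "0 < xp" and "xp < xm"
  shows "expval psi (Theta (Xop xm xp)) = complex_of_real (xm / (xp + xm))"
proof -
  interpret orthogonal_eigenbasis "Xop xm xp" "X_eigvec xm xp" "X_eigval xm xp"
    using assms by (intro X_orthogonal_eigenbasis) auto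
  have s: "complex_of_real (sqrt (xm * xp)) * complex_of_real (sqrt (xm * xp))
             = complex_of_real xm * complex_of_real xp"
    using assms by (simp flip: of_real_mult)
  have "{i. X_eigval xm xp i > 0} = {0, 1}"
    using assms exhaust_4 by (auto simp: X_eigval_def)
  then have "Theta (Xop xm xp) = eigproj {0, 1}"
    using assms by (simp add: Theta_eq_eigproj X_eigval_neq_0)
  moreover have "cinner (X_eigvec xm xp 1) psi = 0"
    by (simp add: cinner_def sum_4 psi_nth X_eigvec_def vec4_def Let_def)
  ultimately have "expval psi (Theta (Xop xm xp))
      = cnj (cinner (X_eigvec xm xp 0) psi) * cinner (X_eigvec xm xp 0) psi
        / cinner (X_eigvec xm xp 0) (X_eigvec xm xp 0)"
    by (simp add: expval_eigproj)
  also have "cinner (X_eigvec xm xp 0) psi = complex_of_real (2 / sqrt 2 * sqrt (xp * xm))"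
    by (simp add: cinner_def sum_4 psi_nth X_eigvec_def vec4_def Let_def)
  also have "cinner (X_eigvec xm xp 0) (X_eigvec xm xp 0) = complex_of_real (2 * xp * (xp + xm))"
    using s by (simp add: cinner_def sum_4 X_eigvec_def vec4_def Let_def algebra_simps)
  also have "cnj (complex_of_real (2 / sqrt 2 * sqrt (xp * xm)))
               * complex_of_real (2 / sqrt 2 * sqrt (xp * xm)) / complex_of_real (2 * xp * (xp + xm))
             = complex_of_real ((2 / sqrt 2 * sqrt (xp * xm))\<^sup>2 / (2 * xp * (xp + xm)))"
    by (simp only: complex_cnj_complex_of_real power2_eq_square flip: of_real_mult of_real_divide)
  also have "(2 / sqrt 2 * sqrt (xp * xm))\<^sup>2 = 2 * xp * xm"
    using assms by (simp add: power_mult_distrib power_divide)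
  also have "2 * xp * xm / (2 * xp * (xp + xm)) = xm / (xp + xm)"
    using assms by simp
  finally show ?thesis .
qed

lemma phase_fixes_psi:
  assumes "\<omega> * t = 2 * pi * real k / 3"
  shows "diag_mat (\<lambda>j. cnj (cis (\<omega> * t * level j))) *v psi = psi"
proof -
  have "cis (\<omega> * t * 3) = 1"
    using assms by simp
  then have "cis (- (\<omega> * t * 3)) = 1"
    by (metis cis_cnj complex_cnj_one)
  then show ?thesis
    by (simp add: vec_eq_iff forall_4 diag_mat_mult_vec_nth psi_nth level_def cis_cnj)
qed

lemma expval_psi_Theta_heis_Xop:
  assumes "0 < xp" and "xp < xm" and "\<omega> * t = 2 * pi * real k / 3"
  shows "expval psi (Theta (heis (Hop \<omega>) (Xop xm xp) t)) = complex_of_real (xm / (xp + xm))"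
proof -
  have "orthogonal_eigenbasis (Xop xm xp) (X_eigvec xm xp) (X_eigval xm xp)"
    using assms by (intro X_orthogonal_eigenbasis) auto
  then show ?thesis
    using assms
    by (simp add: Theta_heis_Hop X_eigval_neq_0 expval_diag_conj phase_fixes_psi
        expval_psi_Theta_Xop)
qed

theorem mainTheorem2:
  fixes xm xp \<omega> :: real
  assumes "xm > xp" and "xp > 0" and "\<omega> > 0"
  shows "spectrum (Xop xm xp) = {- complex_of_real xm, - complex_of_real xp,
                       complex_of_real xp, complex_of_real xm}
    \<and> (\<forall>t. heis (Hop \<omega>) (Xop xm xp) t
               = cscale (complex_of_real (cos (\<omega> * t))) (Xop xm xp)
                 + cscale (complex_of_real (sin (\<omega> * t))) (Yop xm xp))
    \<and> (\<forall>t. heis (Hop \<omega>) (Yop xm xp) t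
               = cscale (complex_of_real (cos (\<omega> * t))) (Yop xm xp)
                 - cscale (complex_of_real (sin (\<omega> * t))) (Xop xm xp))
    \<and> (1/3) * (\<Sum>k<3. expval psi (Theta (heis (Hop \<omega>) (Xop xm xp) (2 * pi * real k / (3 * \<omega>)))))
           = complex_of_real (inverse (1 + xp / xm))"
proof -
  have "expval psi (Theta (heis (Hop \<omega>) (Xop xm xp) (2 * pi * real k / (3 * \<omega>))))
          = complex_of_real (xm / (xp + xm))" for k
    using assms by (intro expval_psi_Theta_heis_Xop) auto
  moreover have "inverse (1 + xp / xm) = xm / (xp + xm)"
    using assms by (simp add: field_simps)
  ultimately show ?thesis
    using assms by (simp add: spectrum_Xop heis_Hop_Xop heis_Hop_Yop)
qed

end
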